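(* Let $\mathcal{I}$ be the input simplicial model, let $\langle\mathcal{I},\mathcal{P},\Psi\rangle$ be a simplicial protocol, and let $\mathbf{P}=\kappa(\langle\mathcal{I},\mathcal{P},\Psi\rangle)$. Then the action model $\mathbf{P}$ and the partial product update model $\mathcal{I}[\![\mathbf{P}]\!]$ have isomorphic partial epistemic frames, i.e. there is a bijection between the actions of $\mathbf{P}$ and the worlds of $\mathcal{I}[\![\mathbf{P}]\!]$ which, for every agent $a$, preserves and reflects the relation $\sim_a$.
   Context: Agents $\mathsf{Ag}=\{0,\dots,n-1\}$, $n>1$; $\mathsf{Value}=\mathsf{Ag}$; atoms $\mathsf{At}_a=\{\mathrm{input}_a^v\mid v\in\mathsf{Value}\}$. A chromatic simplicial complex $\langle V,S,\chi\rangle$ here has a finite vertex set $V\subseteq\mathsf{Ag}\times\mathsf{Value}$, coloring $\chi((a,v))=a$, and a set $S$ of nonempty subsets of $V$ closed under nonempty subsets in which distinct vertices of a simplex have distinct colors; facets are maximal simplices, $\mathcal{F}(\mathcal{C})$ is the set of facets, and $\chi(X)=\{\chi(v)\mid v\in X\}$. The input simplicial model $\mathcal{I}$ has vertices $\mathsf{Ag}\times\mathsf{Value}$ and simplices all nonempty subsets of sets $\{(0,v_0),\dots,(n-1,v_{n-1})\}$; its facets are these full sets, labeled $\ell^{\mathcal{I}}(X)=\{\mathrm{input}_a^v\mid(a,v)\in X\}$; as a partial epistemic model its worlds are its facets with $X\sim_aY$ iff $a\in\chi(X\cap Y)$ and labels $\ell^{\mathcal{I}}$. A facet map $\Theta:\mathcal{F}(\mathcal{C})\to\mathcal{P}(\mathcal{F}(\mathcal{D}))$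 satisfies $\bigcup_{Y\in\Theta(X)}\chi(Y)\subseteq\chi(X)$ for all $X$, and $\mathcal{F}(\mathcal{D})=\bigcup_X\Theta(X)$. A simplicial protocol $\langle\mathcal{I},\mathcal{P},\Psi\rangle$ consists of a complex $\mathcal{P}$ and a facet map $\Psi:\mathcal{F}(\mathcal{I})\to\mathcal{P}(\mathcal{F}(\mathcal{P}))$ such that $\chi(Y\cap Y')\subseteq\chi(X\cap X')$ whenever $Y\in\Psi(X)$, $Y'\in\Psi(X')$. The translation $\kappa(\langle\mathcal{I},\mathcal{D},\Theta\rangle)$ is the action model with actions $\mathcal{F}(\mathcal{D})$, $Y\sim_aY'$ iff $a\in\chi(Y\cap Y')$, and $\mathsf{pre}(Y)=\bigvee\{\bigwedge\ell^{\mathcal{I}}(X)\mid X\in\mathcal{F}(\mathcal{I}),Y\in\Theta(X)\}$. An action model is a partial epistemic frame (set with partial equivalence relations $\sim_a$) plus precondition formulas (epistemic logic with $K_a$); $\mathrm{Alive}(t)=\{a\mid t\sim_at\}$, $w\sim_Aw'$ means $w\sim_aw'$ for all $a\in A$. Partial product update $\mathcal{I}[\![\mathbf{A}]\!]$: with $\langle X\rangle_t=\{Y\mid X\sim^{\mathcal{I}}_{\mathrm{Alive}(t)}Y,\ \mathcal{I},Y\models\mathsf{pre}(t)\}$, worlds are $(\langle X\rangle_t,t)$ with $\mathrm{Alive}(t)\subseteq\mathrm{Alive}(X)$ and $\mathcal{I},X\models\mathsf{pre}(t)$; $(\langle X\rangle_t,t)\sim_a(\langle Y\rangle_s,s)$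 iff $X\sim^{\mathcal{I}}_aY$ and $t\sim_as$; label $\bigcap_{X'\in\langle X\rangle_t}\ell^{\mathcal{I}}(X')$. *)

theory Defs
  imports Main
begin

(* Agents Ag = {0..<n}, Value = Ag.  A vertex is a pair (a, v) :: nat \<times> nat with colour a.
   The atom input_a^v is represented by the pair (a, v). *)

type_synonym vtx = "nat \<times> nat"
type_synonym atom = "nat \<times> nat"

datatype form = Atom atom | Neg form | Conj "form list" | Disj "form list" | K nat form

record 'w pem =
  W :: "'w set"
  R :: "nat \<Rightarrow> ('w \<times> 'w) set"
  L :: "'w \<Rightarrow> atom set"

record 'a actm =
  Act :: "'a set"
  AR :: "nat \<Rightarrow> ('a \<times> 'a) set"
  pre :: "'a \<Rightarrow> form"

primrec sat :: "'w pem \<Rightarrow> 'w \<Rightarrow> form \<Rightarrow> bool" where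
  "sat M w (Atom p) = (p \<in> L M w)"
| "sat M w (Neg \<phi>) = (\<not> sat M w \<phi>)"
| "sat M w (Conj xs) = list_all id (map (sat M w) xs)"
| "sat M w (Disj xs) = list_ex id (map (sat M w) xs)"
| "sat M w (K a \<phi>) = (\<forall>v. (w, v) \<in> R M a \<longrightarrow> sat M v \<phi>)"

definition alive :: "(nat \<Rightarrow> ('x \<times> 'x) set) \<Rightarrow> 'x \<Rightarrow> nat set" where
  "alive Rel x = {a. (x, x) \<in> Rel a}"

definition rel_set :: "(nat \<Rightarrow> ('x \<times> 'x) set) \<Rightarrow> nat set \<Rightarrow> 'x \<Rightarrow> 'x \<Rightarrow> bool" where
  "rel_set Rel A x y = (\<forall>a\<in>A. (x, y) \<in> Rel a)"

definition cls :: "'w pem \<Rightarrow> 'a actm \<Rightarrow> 'w \<Rightarrow> 'a \<Rightarrow> 'w set" where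
  "cls M A X t = {Y \<in> W M. rel_set (R M) (alive (AR A) t) X Y \<and> sat M Y (pre A t)}"

definition upd_ok :: "'w pem \<Rightarrow> 'a actm \<Rightarrow> 'w \<Rightarrow> 'a \<Rightarrow> bool" where
  "upd_ok M A X t = (X \<in> W M \<and> t \<in> Act A \<and> alive (AR A) t \<subseteq> alive (R M) X \<and> sat M X (pre A t))"

definition update :: "'w pem \<Rightarrow> 'a actm \<Rightarrow> ('w set \<times> 'a) pem" where
  "update M A = \<lparr>
     W = {(cls M A X t, t) | X t. upd_ok M A X t},
     R = (\<lambda>a. {((cls M A X t, t), (cls M A Y s, s)) | X t Y s.
                 upd_ok M A X t \<and> upd_ok M A Y s \<and> (X, Y) \<in> R M a \<and> (t, s) \<in> AR A a}),
     L = (\<lambda>(C, t). \<Inter>X'\<in>C. L M X') \<rparr>"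

type_synonym cplx = "vtx set \<times> vtx set set"

definition chi :: "vtx set \<Rightarrow> nat set" where
  "chi X = fst ` X"

definition is_complex :: "nat \<Rightarrow> cplx \<Rightarrow> bool" where
  "is_complex n C = (finite (fst C) \<and> fst C \<subseteq> {0..<n} \<times> {0..<n}
     \<and> (\<forall>X\<in>snd C. X \<noteq> {} \<and> X \<subseteq> fst C \<and> inj_on fst X)
     \<and> (\<forall>X\<in>snd C. \<forall>Y. Y \<noteq> {} \<and> Y \<subseteq> X \<longrightarrow> Y \<in> snd C))"

definition facets :: "cplx \<Rightarrow> vtx set set" where
  "facets C = {X \<in> snd C. \<forall>Y\<in>snd C. X \<subseteq> Y \<longrightarrow> X = Y}"

definition input_cplx :: "nat \<Rightarrow> cplx" where
  "input_cplx n = ({0..<n} \<times> {0..<n},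
     {X. X \<noteq> {} \<and> (\<exists>f. (\<forall>a<n. f a < n) \<and> X \<subseteq> {(a, f a) | a. a < n})})"

definition facet_map :: "cplx \<Rightarrow> cplx \<Rightarrow> (vtx set \<Rightarrow> vtx set set) \<Rightarrow> bool" where
  "facet_map C D \<Theta> = ((\<forall>X\<in>facets C. \<Theta> X \<subseteq> facets D \<and> (\<Union>Y\<in>\<Theta> X. chi Y) \<subseteq> chi X)
     \<and> facets D = (\<Union>X\<in>facets C. \<Theta> X))"

definition simplicial_protocol :: "nat \<Rightarrow> cplx \<Rightarrow> (vtx set \<Rightarrow> vtx set set) \<Rightarrow> bool" where
  "simplicial_protocol n P \<Psi> = (is_complex n P \<and> facet_map (input_cplx n) P \<Psi>
     \<and> (\<forall>X\<in>facets (input_cplx n). \<forall>X'\<in>facets (input_cplx n). \<forall>Y\<in>\<Psi> X. \<forall>Y'\<in>\<Psi> X'.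
           chi (Y \<inter> Y') \<subseteq> chi (X \<inter> X')))"

text \<open>Labels \<ell>(X) = {input_a^v | (a,v) \<in> X}; atoms are represented by the vertex pairs.\<close>
definition lab :: "vtx set \<Rightarrow> atom set" where
  "lab X = X"

definition input_model :: "nat \<Rightarrow> vtx set pem" where
  "input_model n = \<lparr> W = facets (input_cplx n),
     R = (\<lambda>a. {(X, Y). X \<in> facets (input_cplx n) \<and> Y \<in> facets (input_cplx n) \<and> a \<in> chi (X \<inter> Y)}),
     L = lab \<rparr>"

text \<open>Big conjunction / disjunction of a finite set of formulas (order irrelevant for semantics).\<close>
definition BigConj :: "form set \<Rightarrow> form" where
  "BigConj F = Conj (SOME xs. set xs = F \<and> distinct xs)"

definition BigDisj :: "form set \<Rightarrow> form" where
  "BigDisj F = Disj (SOME xs. set xs = F \<and> distinct xs)"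

definition kappa :: "nat \<Rightarrow> cplx \<Rightarrow> (vtx set \<Rightarrow> vtx set set) \<Rightarrow> vtx set actm" where
  "kappa n D \<Theta> = \<lparr> Act = facets D,
     AR = (\<lambda>a. {(Y, Y'). Y \<in> facets D \<and> Y' \<in> facets D \<and> a \<in> chi (Y \<inter> Y')}),
     pre = (\<lambda>Y. BigDisj {BigConj (Atom ` lab X) | X. X \<in> facets (input_cplx n) \<and> Y \<in> \<Theta> X}) \<rparr>"

end

theory Submission
  imports Defs
begin

text \<open>The class \<open>\<langle>X\<rangle>\<^sub>t\<close> of a world \<open>(\<langle>X\<rangle>\<^sub>t, t)\<close> of \<open>\<I>[[\<kappa>(\<I>, \<P>, \<Psi>)]]\<close> does not
  depend on \<open>X\<close>: it is the preimage \<open>\<Psi>\<^sup>-\<^sup>1(t)\<close>. Indeed \<open>\<I>, Y \<Turnstile> pre(t)\<close> means \<open>t \<in> \<Psi>(Y)\<close>,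
  and then the protocol condition for \<open>t \<in> \<Psi>(X)\<close>, \<open>t \<in> \<Psi>(Y)\<close> gives \<open>\<chi>(t) \<subseteq> \<chi>(X \<inter> Y)\<close>,
  i.e. \<open>X \<sim>\<^bsub>Alive(t)\<^esub> Y\<close>. So \<open>t \<mapsto> (\<Psi>\<^sup>-\<^sup>1(t), t)\<close> is a bijection onto the worlds, and it
  respects \<open>\<sim>\<^sub>a\<close> because \<open>a \<in> \<chi>(t \<inter> s)\<close> again yields \<open>a \<in> \<chi>(X \<inter> Y)\<close> for any preimages
  \<open>X\<close>, \<open>Y\<close> of \<open>t\<close>, \<open>s\<close>.\<close>

lemma set_some_distinct_list:
  "finite F \<Longrightarrow> set (SOME xs. set xs = F \<and> distinct xs) = F"
  by (metis (mono_tags, lifting) finite_distinct_list someI_ex)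

lemma sat_BigConj: "finite F \<Longrightarrow> sat M w (BigConj F) \<longleftrightarrow> (\<forall>\<phi>\<in>F. sat M w \<phi>)"
  unfolding BigConj_def by (simp add: set_some_distinct_list list_all_iff)

lemma sat_BigDisj: "finite F \<Longrightarrow> sat M w (BigDisj F) \<longleftrightarrow> (\<exists>\<phi>\<in>F. sat M w \<phi>)"
  unfolding BigDisj_def by (simp add: set_some_distinct_list list_ex_iff)

lemma facets_subset_eq: "X \<in> facets C \<Longrightarrow> Y \<in> facets C \<Longrightarrow> X \<subseteq> Y \<Longrightarrow> X = Y"
  unfolding facets_def by auto

lemma facets_input_cplx_subset: "X \<in> facets (input_cplx n) \<Longrightarrow> X \<subseteq> {0..<n} \<times> {0..<n}"
  unfolding facets_def input_cplx_def by auto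

lemma finite_facets_input_cplx: "finite (facets (input_cplx n))"
  by (rule finite_subset[of _ "Pow ({0..<n} \<times> {0..<n})"]) (auto dest: facets_input_cplx_subset)

lemma sat_input_model_BigConj_lab:
  assumes "X \<in> facets (input_cplx n)"
  shows "sat (input_model n) Y (BigConj (Atom ` lab X)) \<longleftrightarrow> X \<subseteq> Y"
proof -
  have "finite X"
    using facets_input_cplx_subset[OF assms] by (rule finite_subset) simp
  then show ?thesis
    by (auto simp: sat_BigConj lab_def input_model_def)
qed

lemma sat_pre_kappa:
  assumes "Y \<in> facets (input_cplx n)"
  shows "sat (input_model n) Y (pre (kappa n D \<Theta>) t) \<longleftrightarrow> t \<in> \<Theta> Y"
proof -
  let ?S = "{BigConj (Atom ` lab X) | X. X \<in> facets (input_cplx n) \<and> t \<in> \<Theta> X}"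
  have "?S = (\<lambda>X. BigConj (Atom ` lab X)) ` {X \<in> facets (input_cplx n). t \<in> \<Theta> X}"
    by auto
  then have "finite ?S"
    using finite_facets_input_cplx by simp
  then have "sat (input_model n) Y (pre (kappa n D \<Theta>) t)
      \<longleftrightarrow> (\<exists>X\<in>facets (input_cplx n). t \<in> \<Theta> X \<and> X \<subseteq> Y)"
    by (auto simp: kappa_def sat_BigDisj sat_input_model_BigConj_lab)
  also have "\<dots> \<longleftrightarrow> t \<in> \<Theta> Y"
    using assms facets_subset_eq by blast
  finally show ?thesis .
qed

lemma W_input_model [simp]: "W (input_model n) = facets (input_cplx n)"
  by (simp add: input_model_def)

lemma R_input_model_iff:
  "(X, Y) \<in> R (input_model n) a
    \<longleftrightarrow> X \<in> facets (input_cplx n) \<and> Y \<in> facets (input_cplx n) \<and> a \<in> chi (X \<inter> Y)"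
  by (simp add: input_model_def)

lemma Act_kappa [simp]: "Act (kappa n D \<Theta>) = facets D"
  by (simp add: kappa_def)

lemma AR_kappa_iff:
  "(t, s) \<in> AR (kappa n D \<Theta>) a \<longleftrightarrow> t \<in> facets D \<and> s \<in> facets D \<and> a \<in> chi (t \<inter> s)"
  by (simp add: kappa_def)

lemma alive_AR_kappa: "t \<in> facets D \<Longrightarrow> alive (AR (kappa n D \<Theta>)) t = chi t"
  unfolding alive_def by (simp add: AR_kappa_iff)

lemma alive_R_input_model: "X \<in> facets (input_cplx n) \<Longrightarrow> alive (R (input_model n)) X = chi X"
  unfolding alive_def by (simp add: R_input_model_iff)

lemma update_R_imp_AR: "((C, t), (C', s)) \<in> R (update M A) a \<Longrightarrow> (t, s) \<in> AR A a"
  unfolding update_def by auto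

lemma update_RI:
  "upd_ok M A X t \<Longrightarrow> upd_ok M A Y s \<Longrightarrow> (X, Y) \<in> R M a \<Longrightarrow> (t, s) \<in> AR A a
    \<Longrightarrow> ((cls M A X t, t), (cls M A Y s, s)) \<in> R (update M A) a"
  unfolding update_def by auto

lemma facet_mapD:
  "facet_map C D \<Theta> \<Longrightarrow> X \<in> facets C \<Longrightarrow> t \<in> \<Theta> X \<Longrightarrow> t \<in> facets D \<and> chi t \<subseteq> chi X"
  unfolding facet_map_def by blast

lemma facet_map_facets_eq: "facet_map C D \<Theta> \<Longrightarrow> facets D = (\<Union>X\<in>facets C. \<Theta> X)"
  unfolding facet_map_def by blast

lemma simplicial_protocol_facet_map: "simplicial_protocol n P \<Psi> \<Longrightarrow> facet_map (input_cplx n) P \<Psi>"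
  unfolding simplicial_protocol_def by blast

lemma simplicial_protocol_chi_inter_subset:
  "simplicial_protocol n P \<Psi> \<Longrightarrow> X \<in> facets (input_cplx n) \<Longrightarrow> X' \<in> facets (input_cplx n)
    \<Longrightarrow> Y \<in> \<Psi> X \<Longrightarrow> Y' \<in> \<Psi> X' \<Longrightarrow> chi (Y \<inter> Y') \<subseteq> chi (X \<inter> X')"
  unfolding simplicial_protocol_def by blast

lemma upd_ok_kappa_iff:
  assumes "facet_map (input_cplx n) D \<Theta>"
  shows "upd_ok (input_model n) (kappa n D \<Theta>) X t \<longleftrightarrow> X \<in> facets (input_cplx n) \<and> t \<in> \<Theta> X"
proof
  assume "upd_ok (input_model n) (kappa n D \<Theta>) X t"
  then show "X \<in> facets (input_cplx n) \<and> t \<in> \<Theta> X"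
    unfolding upd_ok_def by (auto simp: sat_pre_kappa)
next
  assume X: "X \<in> facets (input_cplx n) \<and> t \<in> \<Theta> X"
  with facet_mapD[OF assms] have "t \<in> facets D" and "chi t \<subseteq> chi X"
    by blast+
  with X show "upd_ok (input_model n) (kappa n D \<Theta>) X t"
    unfolding upd_ok_def by (simp add: sat_pre_kappa alive_AR_kappa alive_R_input_model)
qed

definition facet_preimage :: "(vtx set \<Rightarrow> vtx set set) \<Rightarrow> cplx \<Rightarrow> vtx set \<Rightarrow> vtx set set" where
  "facet_preimage \<Theta> C t = {X \<in> facets C. t \<in> \<Theta> X}"

lemma cls_kappa_eq_facet_preimage:
  assumes "simplicial_protocol n P \<Psi>" and X: "X \<in> facets (input_cplx n)" "t \<in> \<Psi> X"
  shows "cls (input_model n) (kappa n P \<Psi>) X t = facet_preimage \<Psi> (input_cplx n) t"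
proof -
  have "t \<in> facets P"
    using facet_mapD[OF simplicial_protocol_facet_map[OF assms(1)] X] by blast
  then have "cls (input_model n) (kappa n P \<Psi>) X t
      = {Y \<in> facets (input_cplx n). (\<forall>a\<in>chi t. a \<in> chi (X \<inter> Y)) \<and> t \<in> \<Psi> Y}"
    using X unfolding cls_def rel_set_def
    by (auto simp: alive_AR_kappa sat_pre_kappa R_input_model_iff)
  also have "\<dots> = facet_preimage \<Psi> (input_cplx n) t"
    using simplicial_protocol_chi_inter_subset[OF assms(1) X(1) _ X(2), of _ t]
    unfolding facet_preimage_def by auto
  finally show ?thesis .
qed

lemma W_update_kappa:
  assumes "simplicial_protocol n P \<Psi>"
  shows "W (update (input_model n) (kappa n P \<Psi>))
    = (\<lambda>t. (facet_preimage \<Psi> (input_cplx n) t, t)) ` facets P"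
proof -
  note fm = simplicial_protocol_facet_map[OF assms]
  have "W (update (input_model n) (kappa n P \<Psi>))
      = {(facet_preimage \<Psi> (input_cplx n) t, t) | X t. X \<in> facets (input_cplx n) \<and> t \<in> \<Psi> X}"
    unfolding update_def using cls_kappa_eq_facet_preimage[OF assms]
    by (simp add: upd_ok_kappa_iff[OF fm]) blast
  also have "\<dots> = (\<lambda>t. (facet_preimage \<Psi> (input_cplx n) t, t)) ` (\<Union>X\<in>facets (input_cplx n). \<Psi> X)"
    by blast
  finally show ?thesis
    by (simp add: facet_map_facets_eq[OF fm])
qed

lemma R_update_kappa_iff:
  assumes "simplicial_protocol n P \<Psi>" and "t \<in> facets P" and "s \<in> facets P"
  shows "((facet_preimage \<Psi> (input_cplx n) t, t), (facet_preimage \<Psi> (input_cplx n) s, s))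
      \<in> R (update (input_model n) (kappa n P \<Psi>)) a
    \<longleftrightarrow> (t, s) \<in> AR (kappa n P \<Psi>) a"
proof
  assume "((facet_preimage \<Psi> (input_cplx n) t, t), (facet_preimage \<Psi> (input_cplx n) s, s))
      \<in> R (update (input_model n) (kappa n P \<Psi>)) a"
  then show "(t, s) \<in> AR (kappa n P \<Psi>) a"
    by (rule update_R_imp_AR)
next
  assume ts: "(t, s) \<in> AR (kappa n P \<Psi>) a"
  note fm = simplicial_protocol_facet_map[OF assms(1)]
  obtain X Y where X: "X \<in> facets (input_cplx n)" "t \<in> \<Psi> X"
    and Y: "Y \<in> facets (input_cplx n)" "s \<in> \<Psi> Y"
    using assms(2,3) unfolding facet_map_facets_eq[OF fm] by blast
  have "a \<in> chi (t \<inter> s)"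
    using ts by (simp add: AR_kappa_iff)
  also have "\<dots> \<subseteq> chi (X \<inter> Y)"
    using simplicial_protocol_chi_inter_subset[OF assms(1) X(1) Y(1) X(2) Y(2)] .
  finally have "(X, Y) \<in> R (input_model n) a"
    using X Y by (simp add: R_input_model_iff)
  moreover have "upd_ok (input_model n) (kappa n P \<Psi>) X t"
    and "upd_ok (input_model n) (kappa n P \<Psi>) Y s"
    using X Y by (simp_all add: upd_ok_kappa_iff[OF fm])
  ultimately have "((cls (input_model n) (kappa n P \<Psi>) X t, t),
      (cls (input_model n) (kappa n P \<Psi>) Y s, s)) \<in> R (update (input_model n) (kappa n P \<Psi>)) a"
    using ts by (blast intro: update_RI)
  then show "((facet_preimage \<Psi> (input_cplx n) t, t), (facet_preimage \<Psi> (input_cplx n) s, s))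
      \<in> R (update (input_model n) (kappa n P \<Psi>)) a"
    by (simp only: cls_kappa_eq_facet_preimage[OF assms(1) X]
        cls_kappa_eq_facet_preimage[OF assms(1) Y])
qed

theorem propositionA3:
  fixes n :: nat and P :: cplx and \<Psi> :: "vtx set \<Rightarrow> vtx set set"
  assumes "n > 1"
    and "simplicial_protocol n P \<Psi>"
  shows "\<exists>f. bij_betw f (Act (kappa n P \<Psi>)) (W (update (input_model n) (kappa n P \<Psi>)))
           \<and> (\<forall>a<n. \<forall>t\<in>Act (kappa n P \<Psi>). \<forall>s\<in>Act (kappa n P \<Psi>).
                 (t, s) \<in> AR (kappa n P \<Psi>) a
                   \<longleftrightarrow> (f t, f s) \<in> R (update (input_model n) (kappa n P \<Psi>)) a)"
proof (intro exI conjI)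
  let ?f = "\<lambda>t. (facet_preimage \<Psi> (input_cplx n) t, t)"
  show "bij_betw ?f (Act (kappa n P \<Psi>)) (W (update (input_model n) (kappa n P \<Psi>)))"
    unfolding Act_kappa W_update_kappa[OF assms(2)] by (rule bij_betw_imageI) (auto intro: inj_onI)
  show "\<forall>a<n. \<forall>t\<in>Act (kappa n P \<Psi>). \<forall>s\<in>Act (kappa n P \<Psi>).
      (t, s) \<in> AR (kappa n P \<Psi>) a \<longleftrightarrow> (?f t, ?f s) \<in> R (update (input_model n) (kappa n P \<Psi>)) a"
    unfolding Act_kappa using R_update_kappa_iff[OF assms(2)] by blast
qed

end
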